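(* Let $E$ be a Fréchet space, $E^*$ its topological dual with the weak$^*$ topology, $J=[a,b]$ with $a<b$, and $f:J\to E^*$ continuous. Then $$\int_a^b f(t)(\mu'(t))\,dt=0$$ for every $\mu\in C^1(J,E)$ with $\mu(a)=\mu(b)=0$ if and only if $f$ is constant on $J$.
   Context: $C^1(J,E)$ denotes continuously differentiable curves $J\to E$ (one-sided derivatives at the endpoints). The integrals are ordinary Lebesgue integrals of continuous real functions; integrals of $E^*$-valued continuous functions are understood in the weak sense: $\int_a^b f\,dt$ is the element $l\in E^*$ with $l(e)=\int_a^b f(t)(e)\,dt$ for all $e\in E$. *)

theory Defs
  imports "HOL-Analysis.Analysis"
begin

text \<open>A Frechet space is modelled as a real vector space 'e together with a
countable family of seminorms p :: nat => 'e => real that separates points and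
for which the induced (metrizable, locally convex) topology is complete.\<close>

definition seminorm_on :: "('e::real_vector \<Rightarrow> real) \<Rightarrow> bool" where
  "seminorm_on q \<longleftrightarrow> (\<forall>x y. q (x + y) \<le> q x + q y) \<and> (\<forall>c x. q (c *\<^sub>R x) = \<bar>c\<bar> * q x)"

definition sn_cauchy :: "(nat \<Rightarrow> 'e::real_vector \<Rightarrow> real) \<Rightarrow> (nat \<Rightarrow> 'e) \<Rightarrow> bool" where
  "sn_cauchy p x \<longleftrightarrow> (\<forall>n. \<forall>\<epsilon>>0. \<exists>M. \<forall>i\<ge>M. \<forall>j\<ge>M. p n (x i - x j) < \<epsilon>)"

definition sn_tendsto :: "(nat \<Rightarrow> 'e::real_vector \<Rightarrow> real) \<Rightarrow> ('b \<Rightarrow> 'e) \<Rightarrow> 'e \<Rightarrow> 'b filter \<Rightarrow> bool" where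
  "sn_tendsto p g L F \<longleftrightarrow> (\<forall>n. ((\<lambda>s. p n (g s - L)) \<longlongrightarrow> 0) F)"

definition frechet_seminorms :: "(nat \<Rightarrow> 'e::real_vector \<Rightarrow> real) \<Rightarrow> bool" where
  "frechet_seminorms p \<longleftrightarrow>
     (\<forall>n. seminorm_on (p n)) \<and>
     (\<forall>x. (\<forall>n. p n x = 0) \<longrightarrow> x = 0) \<and>
     (\<forall>x. sn_cauchy p x \<longrightarrow> (\<exists>L. sn_tendsto p x L sequentially))"

text \<open>Topological dual: linear functionals continuous (at 0, hence everywhere)
for the seminorm topology, whose basic 0-neighbourhoods are finite intersections
of seminorm balls.\<close>

definition sn_dual :: "(nat \<Rightarrow> 'e::real_vector \<Rightarrow> real) \<Rightarrow> ('e \<Rightarrow> real) set" where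
  "sn_dual p = {l. linear l \<and>
     (\<forall>\<epsilon>>0. \<exists>N. \<exists>\<delta>>0. \<forall>x. (\<forall>n\<le>N. p n x < \<delta>) \<longrightarrow> \<bar>l x\<bar> < \<epsilon>)}"

definition sn_C1_on :: "(nat \<Rightarrow> 'e::real_vector \<Rightarrow> real) \<Rightarrow> real set \<Rightarrow> (real \<Rightarrow> 'e) \<Rightarrow> (real \<Rightarrow> 'e) \<Rightarrow> bool" where
  "sn_C1_on p J \<mu> \<mu>' \<longleftrightarrow>
     (\<forall>t\<in>J. sn_tendsto p (\<lambda>s. (1 / (s - t)) *\<^sub>R (\<mu> s - \<mu> t)) (\<mu>' t) (at t within J)) \<and>
     (\<forall>t\<in>J. sn_tendsto p \<mu>' (\<mu>' t) (at t within J))"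

definition weak_star_continuous_on :: "real set \<Rightarrow> (real \<Rightarrow> 'e \<Rightarrow> real) \<Rightarrow> bool" where
  "weak_star_continuous_on J f \<longleftrightarrow> (\<forall>e. continuous_on J (\<lambda>t. f t e))"

end

theory Submission
  imports Defs
begin

text \<open>For a weak-* continuous f and a vector e, the scalar function t \<mapsto> f t e is continuous,
and testing f against curves \<phi>(t) e with real \<phi> reduces the claim to the classical
du Bois-Reymond lemma: if g is continuous and orthogonal to every \<phi>' with \<phi>(a) = \<phi>(b) = 0,
take \<phi>' = g - c with c the mean of g; then the integral of the square of g - c vanishes, so g = c.
Conversely, if f is constant, the integral is l(\<mu>(b)) - l(\<mu>(a)) = 0 by the fundamental
theorem of calculus, because a continuous functional commutes with the difference quotients.\<close>

lemma sn_dual_tendsto: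
  assumes l: "l \<in> sn_dual p" and g: "sn_tendsto p g L F"
  shows "((\<lambda>s. l (g s)) \<longlongrightarrow> l L) F"
proof (rule tendstoI)
  fix \<epsilon> :: real assume "\<epsilon> > 0"
  with l obtain N \<delta> where "\<delta> > 0" and small: "\<And>x. (\<forall>n\<le>N. p n x < \<delta>) \<Longrightarrow> \<bar>l x\<bar> < \<epsilon>"
    unfolding sn_dual_def by blast
  have "\<forall>n\<in>{..N}. eventually (\<lambda>s. \<bar>p n (g s - L)\<bar> < \<delta>) F"
    using g \<open>\<delta> > 0\<close> by (auto simp: sn_tendsto_def tendsto_iff dist_real_def)
  then have "eventually (\<lambda>s. \<forall>n\<le>N. p n (g s - L) < \<delta>) F"
    by (simp add: eventually_ball_finite_distrib[symmetric]) (auto elim!: eventually_mono simp: abs_less_iff)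
  then show "eventually (\<lambda>s. dist (l (g s)) (l L) < \<epsilon>) F"
    using l small by (auto simp: sn_dual_def dist_real_def linear_diff[symmetric] elim!: eventually_mono)
qed

lemma sn_tendsto_scaleR_const:
  assumes "\<forall>n. seminorm_on (p n)" and "(h \<longlongrightarrow> c) F"
  shows "sn_tendsto p (\<lambda>s. h s *\<^sub>R e) (c *\<^sub>R e) F"
  unfolding sn_tendsto_def
proof
  fix n
  have "((\<lambda>s. \<bar>h s - c\<bar> * p n e) \<longlongrightarrow> 0) F"
    using assms(2) by (intro tendsto_mult_left_zero tendsto_rabs_zero) (simp add: LIM_zero)
  moreover have "p n (h s *\<^sub>R e - c *\<^sub>R e) = \<bar>h s - c\<bar> * p n e" for s
    using assms(1) by (simp add: seminorm_on_def scaleR_diff_left[symmetric])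
  ultimately show "((\<lambda>s. p n (h s *\<^sub>R e - c *\<^sub>R e)) \<longlongrightarrow> 0) F"
    by simp
qed

lemma sn_C1_on_scaleR_const:
  assumes "\<forall>n. seminorm_on (p n)"
    and "\<And>t. t \<in> J \<Longrightarrow> (\<phi> has_field_derivative \<phi>' t) (at t within J)"
    and "continuous_on J \<phi>'"
  shows "sn_C1_on p J (\<lambda>u. \<phi> u *\<^sub>R e) (\<lambda>u. \<phi>' u *\<^sub>R e)"
  unfolding sn_C1_on_def
proof (intro conjI ballI)
  fix t assume "t \<in> J"
  have "((\<lambda>s. (\<phi> s - \<phi> t) / (s - t)) \<longlongrightarrow> \<phi>' t) (at t within J)"
    using assms(2)[OF \<open>t \<in> J\<close>] by (simp add: has_field_derivative_iff)
  from sn_tendsto_scaleR_const[OF assms(1) this]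
  show "sn_tendsto p (\<lambda>s. (1 / (s - t)) *\<^sub>R (\<phi> s *\<^sub>R e - \<phi> t *\<^sub>R e)) (\<phi>' t *\<^sub>R e) (at t within J)"
    by (simp add: scaleR_diff_left[symmetric] divide_inverse mult.commute)
  have "(\<phi>' \<longlongrightarrow> \<phi>' t) (at t within J)"
    using assms(3) \<open>t \<in> J\<close> unfolding continuous_on_def by blast
  with assms(1) show "sn_tendsto p (\<lambda>u. \<phi>' u *\<^sub>R e) (\<phi>' t *\<^sub>R e) (at t within J)"
    by (rule sn_tendsto_scaleR_const)
qed

lemma sn_dual_has_vector_derivative:
  assumes "l \<in> sn_dual p" and "sn_C1_on p J \<mu> \<mu>'" and "t \<in> J"
  shows "((\<lambda>s. l (\<mu> s)) has_vector_derivative l (\<mu>' t)) (at t within J)"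
proof -
  have "((\<lambda>s. l ((1 / (s - t)) *\<^sub>R (\<mu> s - \<mu> t))) \<longlongrightarrow> l (\<mu>' t)) (at t within J)"
    using assms by (intro sn_dual_tendsto) (auto simp: sn_C1_on_def)
  moreover have "linear l"
    using assms(1) by (simp add: sn_dual_def)
  ultimately have "((\<lambda>s. (l (\<mu> s) - l (\<mu> t)) / (s - t)) \<longlongrightarrow> l (\<mu>' t)) (at t within J)"
    by (simp add: linear_scale linear_diff divide_inverse mult.commute)
  then show ?thesis
    by (simp add: has_field_derivative_iff has_real_derivative_iff_has_vector_derivative[symmetric])
qed

lemma sn_dual_integral_derivative:
  assumes "l \<in> sn_dual p" and "sn_C1_on p {a..b} \<mu> \<mu>'" and "a \<le> b"
  shows "integral {a..b} (\<lambda>t. l (\<mu>' t)) = l (\<mu> b) - l (\<mu> a)"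
  using fundamental_theorem_of_calculus[OF \<open>a \<le> b\<close>, of "\<lambda>s. l (\<mu> s)" "\<lambda>t. l (\<mu>' t)"]
    sn_dual_has_vector_derivative[OF assms(1,2)]
  by (simp add: integral_unique)

lemma continuous_on_integral_square_eq_0:
  fixes h :: "real \<Rightarrow> real"
  assumes "continuous_on {a..b} h" and "a < b"
    and "integral {a..b} (\<lambda>t. (h t)\<^sup>2) = 0" and "x \<in> {a..b}"
  shows "h x = 0"
proof -
  have "continuous_on {a..b} (\<lambda>t. (h t)\<^sup>2)"
    using assms(1) by (intro continuous_intros)
  then have cont: "continuous_on (cbox a b) (\<lambda>t. (h t)\<^sup>2)"
    by (simp add: cbox_interval)
  have "((\<lambda>t. (h t)\<^sup>2) has_integral 0) (cbox a b)"
    using integrable_integral[OF integrable_continuous[OF cont]] assms(3)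
    by (simp only: cbox_interval)
  moreover have "box a b \<noteq> {}"
    using assms(2) by (simp add: box_ne_empty)
  ultimately have "(h x)\<^sup>2 = 0"
    using has_integral_0_cbox_imp_0[OF cont _ _ _, of x] assms(4)
    by (simp add: cbox_interval)
  then show ?thesis
    by simp
qed

lemma du_Bois_Reymond:
  fixes g :: "real \<Rightarrow> real"
  assumes "continuous_on {a..b} g" and "a < b"
    and orth: "\<And>\<phi> \<phi>'. (\<And>t. t \<in> {a..b} \<Longrightarrow> (\<phi> has_field_derivative \<phi>' t) (at t within {a..b}))
      \<Longrightarrow> continuous_on {a..b} \<phi>' \<Longrightarrow> \<phi> a = 0 \<Longrightarrow> \<phi> b = 0
      \<Longrightarrow> integral {a..b} (\<lambda>t. \<phi>' t * g t) = 0"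
    and "s \<in> {a..b}" and "t \<in> {a..b}"
  shows "g s = g t"
proof -
  define c where "c = integral {a..b} g / (b - a)"
  define \<phi> where "\<phi> u = integral {a..u} (\<lambda>s. g s - c)" for u
  have cont_dev: "continuous_on {a..b} (\<lambda>s. g s - c)"
    using assms(1) by (intro continuous_intros)
  have "\<phi> b = integral {a..b} g - integral {a..b} (\<lambda>s. c)"
    unfolding \<phi>_def using assms(1) by (intro integral_diff integrable_continuous_interval) auto
  then have \<phi>b: "\<phi> b = 0"
    using assms(2) by (simp add: c_def)
  have "integral {a..b} (\<lambda>t. (g t - c) * g t) = 0"
  proof (rule orth)
    show "(\<phi> has_field_derivative g t - c) (at t within {a..b})" if "t \<in> {a..b}" for t
      using integral_has_vector_derivative[OF cont_dev that] unfolding \<phi>_def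
      by (simp add: has_real_derivative_iff_has_vector_derivative)
    show "\<phi> a = 0" "\<phi> b = 0"
      using \<phi>b by (simp_all add: \<phi>_def)
  qed (fact cont_dev)
  moreover have "integral {a..b} (\<lambda>t. (g t - c) * c) = 0"
    using \<phi>b integral_mult_left[of "{a..b}" "\<lambda>t. g t - c" c] by (simp add: \<phi>_def)
  moreover have "integral {a..b} (\<lambda>t. (g t - c)\<^sup>2)
      = integral {a..b} (\<lambda>t. (g t - c) * g t) - integral {a..b} (\<lambda>t. (g t - c) * c)"
  proof -
    have "(\<lambda>t. (g t - c)\<^sup>2) = (\<lambda>t. (g t - c) * g t - (g t - c) * c)"
      by (simp add: power2_eq_square right_diff_distrib)
    moreover have "(\<lambda>t. (g t - c) * g t) integrable_on {a..b}" "(\<lambda>t. (g t - c) * c) integrable_on {a..b}"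
      using assms(1) by (auto intro!: integrable_continuous_interval continuous_intros)
    ultimately show ?thesis
      by (simp add: integral_diff)
  qed
  ultimately have "integral {a..b} (\<lambda>t. (g t - c)\<^sup>2) = 0"
    by simp
  then have "g x - c = 0" if "x \<in> {a..b}" for x
    using continuous_on_integral_square_eq_0[OF cont_dev assms(2) _ that] by simp
  then show ?thesis
    using assms(4,5) by fastforce
qed

lemma sn_C1_orthogonal_imp_scalar_orthogonal:
  assumes "\<forall>n. seminorm_on (p n)" and "\<forall>t\<in>{a..b}. linear (f t)"
    and orth: "\<forall>\<mu> \<mu>'. sn_C1_on p {a..b} \<mu> \<mu>' \<and> \<mu> a = 0 \<and> \<mu> b = 0 \<longrightarrow>
      integral {a..b} (\<lambda>t. f t (\<mu>' t)) = 0"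
    and "\<And>t. t \<in> {a..b} \<Longrightarrow> (\<phi> has_field_derivative \<phi>' t) (at t within {a..b})"
    and "continuous_on {a..b} \<phi>'" and "\<phi> a = 0" and "\<phi> b = 0"
  shows "integral {a..b} (\<lambda>t. \<phi>' t * f t e) = 0"
proof -
  have "sn_C1_on p {a..b} (\<lambda>u. \<phi> u *\<^sub>R e) (\<lambda>u. \<phi>' u *\<^sub>R e)"
    using assms(1,4,5) by (rule sn_C1_on_scaleR_const)
  with orth[rule_format, of "\<lambda>u. \<phi> u *\<^sub>R e"] \<open>\<phi> a = 0\<close> \<open>\<phi> b = 0\<close>
  have "integral {a..b} (\<lambda>t. f t (\<phi>' t *\<^sub>R e)) = 0"
    by simp
  moreover have "integral {a..b} (\<lambda>t. f t (\<phi>' t *\<^sub>R e)) = integral {a..b} (\<lambda>t. \<phi>' t * f t e)"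
    using assms(2) by (intro integral_cong) (simp add: linear_scale)
  ultimately show ?thesis
    by simp
qed

theorem lemma2:
  fixes p :: "nat \<Rightarrow> 'e::real_vector \<Rightarrow> real"
    and f :: "real \<Rightarrow> 'e \<Rightarrow> real"
    and a b :: real
  assumes "frechet_seminorms p"
    and "a < b"
    and "\<forall>t\<in>{a..b}. f t \<in> sn_dual p"
    and "weak_star_continuous_on {a..b} f"
  shows "(\<forall>\<mu> \<mu>'. sn_C1_on p {a..b} \<mu> \<mu>' \<and> \<mu> a = 0 \<and> \<mu> b = 0 \<longrightarrow>
            integral {a..b} (\<lambda>t. f t (\<mu>' t)) = 0)
         \<longleftrightarrow> (\<forall>s\<in>{a..b}. \<forall>t\<in>{a..b}. f s = f t)"
proof
  assume orth: "\<forall>\<mu> \<mu>'. sn_C1_on p {a..b} \<mu> \<mu>' \<and> \<mu> a = 0 \<and> \<mu> b = 0 \<longrightarrow>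
            integral {a..b} (\<lambda>t. f t (\<mu>' t)) = 0"
  have seminorms: "\<forall>n. seminorm_on (p n)"
    using assms(1) by (simp add: frechet_seminorms_def)
  have lin: "\<forall>t\<in>{a..b}. linear (f t)"
    using assms(3) by (simp add: sn_dual_def)
  have "f s e = f t e" if "s \<in> {a..b}" "t \<in> {a..b}" for s t e
  proof (rule du_Bois_Reymond[OF _ assms(2) _ that])
    show "continuous_on {a..b} (\<lambda>t. f t e)"
      using assms(4) by (simp add: weak_star_continuous_on_def)
  qed (rule sn_C1_orthogonal_imp_scalar_orthogonal[OF seminorms lin orth])
  then show "\<forall>s\<in>{a..b}. \<forall>t\<in>{a..b}. f s = f t"
    by blast
next
  assume const: "\<forall>s\<in>{a..b}. \<forall>t\<in>{a..b}. f s = f t"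
  have a: "a \<in> {a..b}"
    using assms(2) by simp
  show "\<forall>\<mu> \<mu>'. sn_C1_on p {a..b} \<mu> \<mu>' \<and> \<mu> a = 0 \<and> \<mu> b = 0 \<longrightarrow>
            integral {a..b} (\<lambda>t. f t (\<mu>' t)) = 0"
  proof (intro allI impI, elim conjE)
    fix \<mu> \<mu>' assume "sn_C1_on p {a..b} \<mu> \<mu>'" "\<mu> a = 0" "\<mu> b = 0"
    moreover have "linear (f a)" "f a \<in> sn_dual p"
      using assms(3) a by (auto simp: sn_dual_def)
    ultimately have "integral {a..b} (\<lambda>t. f a (\<mu>' t)) = 0"
      using assms(2) by (simp add: sn_dual_integral_derivative linear_0)
    moreover have "integral {a..b} (\<lambda>t. f t (\<mu>' t)) = integral {a..b} (\<lambda>t. f a (\<mu>' t))"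
      using const a by (intro integral_cong) (metis (no_types))
    ultimately show "integral {a..b} (\<lambda>t. f t (\<mu>' t)) = 0"
      by simp
  qed
qed

end
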